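(* Let $G=(V,E)$ be a finite simple undirected graph with $|V|=n\ge 1$ and adjacency matrix $A$. Let $\lambda_1\ge\dots\ge\lambda_n$ be the eigenvalues of $A$ (listed with multiplicity), fix an orthonormal basis of $\mathbb{R}^n$ consisting of eigenvectors of $A$ (the $j$-th eigenvector having eigenvalue $\lambda_j$), and let $\mu_1,\dots,\mu_n$ be the coordinates of the all-ones vector $\mathbf{1}_n$ with respect to this basis. Let $k\ge 1$ and let $$f(\mathbf{x})=\sum_{\alpha\in\mathbb{N}^k} c_\alpha\, x_1^{\alpha_1}\cdots x_k^{\alpha_k}\in\mathbb{R}[x_1,\dots,x_k],$$ with $c_\alpha\in\mathbb{R}$ and $c_\alpha=0$ for all but finitely many $\alpha$. Then there are numbers $\gamma(i_1,\dots,i_k)>0$ such that $$\sum_{\alpha\in\mathbb{N}^k} c_\alpha\, w_{\alpha_1}\cdots w_{\alpha_k}=\sum_{1\le i_1\le\dots\le i_k\le n}\gamma(i_1,\dots,i_k)\, f_{\mathrm{sym}}(\lambda_{i_1},\dots,\lambda_{i_k})\,\mu_{i_1}^2\cdots\mu_{i_k}^2 .$$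
   Context: $\mathbb{N}$ denotes the nonnegative integers. For $j\in\mathbb{N}$, $w_j=w_j(G)$ denotes the total number of walks of length $j$ in $G$ (a walk is a sequence of vertices in which consecutive vertices are adjacent; vertices and edges may repeat; the length is the number of edges), so $w_0=n$ and $w_j=\mathbf{1}_n^T A^j\mathbf{1}_n$. For a polynomial $f\in\mathbb{R}[x_1,\dots,x_k]$, its symmetrization is $f_{\mathrm{sym}}(\mathbf{x})=\sum_{\sigma\in S_k} f(x_{\sigma(1)},\dots,x_{\sigma(k)})$. *)

theory Defs
  imports Complex_Main "HOL-Combinatorics.Permutations"
begin

definition simple_graph :: "nat \<Rightarrow> (nat \<Rightarrow> nat \<Rightarrow> bool) \<Rightarrow> bool" where
  "simple_graph n E \<longleftrightarrow> (\<forall>i<n. \<forall>j<n. E i j \<longleftrightarrow> E j i) \<and> (\<forall>i<n. \<not> E i i)"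

definition adj :: "(nat \<Rightarrow> nat \<Rightarrow> bool) \<Rightarrow> nat \<Rightarrow> nat \<Rightarrow> real" where
  "adj E i j = (if E i j then 1 else 0)"

definition walks :: "nat \<Rightarrow> (nat \<Rightarrow> nat \<Rightarrow> bool) \<Rightarrow> nat \<Rightarrow> nat" where
  "walks n E j = card {xs. length xs = Suc j \<and> set xs \<subseteq> {..<n} \<and>
                          (\<forall>i<j. E (xs ! i) (xs ! Suc i))}"

text \<open>Polynomial in k variables with coefficient function c on exponent vectors
  (lists of length k), evaluated at x (variables x 0, ..., x (k-1)).\<close>
definition poly_eval :: "nat \<Rightarrow> (nat list \<Rightarrow> real) \<Rightarrow> (nat \<Rightarrow> real) \<Rightarrow> real" where
  "poly_eval k c x = (\<Sum>\<alpha>\<in>{\<alpha>. length \<alpha> = k \<and> c \<alpha> \<noteq> 0}. c \<alpha> * (\<Prod>i<k. x i ^ (\<alpha> ! i)))"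

definition poly_sym :: "nat \<Rightarrow> (nat list \<Rightarrow> real) \<Rightarrow> (nat \<Rightarrow> real) \<Rightarrow> real" where
  "poly_sym k c x = (\<Sum>\<sigma>\<in>{\<sigma>. \<sigma> permutes {..<k}}. poly_eval k c (\<lambda>i. x (\<sigma> i)))"

end

theory Submission imports Defs begin

text \<open>Expanding the all-ones vector in the orthonormal eigenbasis gives
  A^m 1 = sum_j mu_j lam_j^m v_j, hence w_m = sum_j mu_j^2 lam_j^m. Substituting these power sums
  into f and multiplying out turns the left-hand side into a sum, over all k-tuples t of
  eigenvalue indices, of mu_(t_1)^2 ... mu_(t_k)^2 f(lam_(t_1), ..., lam_(t_k)). Permuting all
  tuples by one fixed permutation does not change this sum, so averaging over the k! permutations
  replaces f by f_sym / k!. The new summand is symmetric, hence constant on the tuples with a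
  given sorted rearrangement s, and gamma(s) = #{t. sort t = s} / k! > 0.\<close>

abbreviation tuples :: "'a set \<Rightarrow> nat \<Rightarrow> 'a list set" where
  "tuples A k \<equiv> {xs. length xs = k \<and> set xs \<subseteq> A}"

abbreviation sorted_tuples :: "'a::linorder set \<Rightarrow> nat \<Rightarrow> 'a list set" where
  "sorted_tuples A k \<equiv> {xs. length xs = k \<and> sorted xs \<and> set xs \<subseteq> A}"

definition walks_from :: "nat \<Rightarrow> (nat \<Rightarrow> nat \<Rightarrow> bool) \<Rightarrow> nat \<Rightarrow> nat \<Rightarrow> nat list set" where
  "walks_from n E m a = {xs. length xs = Suc m \<and> set xs \<subseteq> {..<n} \<and>
                             (\<forall>i<m. E (xs ! i) (xs ! Suc i)) \<and> hd xs = a}"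

lemma finite_walks_from: "finite (walks_from n E m a)"
  by (rule finite_subset[OF _ finite_lists_length_eq[of "{..<n}" "Suc m"]])
     (auto simp: walks_from_def)

lemma walks_from_0: "a < n \<Longrightarrow> walks_from n E 0 a = {[a]}"
  by (auto simp: walks_from_def length_Suc_conv)

lemma walks_from_Suc:
  assumes "a < n"
  shows "walks_from n E (Suc m) a = (\<Union>l\<in>{l. l < n \<and> E a l}. Cons a ` walks_from n E m l)"
proof (intro set_eqI iffI)
  fix xs assume "xs \<in> walks_from n E (Suc m) a"
  then obtain l ys where xs: "xs = a # l # ys" and len: "length ys = m"
    and set: "set (l # ys) \<subseteq> {..<n}" and edges: "\<forall>i<Suc m. E (xs ! i) (xs ! Suc i)"
    by (auto simp: walks_from_def length_Suc_conv)
  have "E a l" using edges[rule_format, of 0] by (simp add: xs)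
  moreover have "l # ys \<in> walks_from n E m l"
    using len set edges by (auto simp: walks_from_def xs)
  ultimately show "xs \<in> (\<Union>l\<in>{l. l < n \<and> E a l}. Cons a ` walks_from n E m l)"
    using set xs by auto
next
  fix xs assume "xs \<in> (\<Union>l\<in>{l. l < n \<and> E a l}. Cons a ` walks_from n E m l)"
  then obtain l ys where "l < n" "E a l" and ys: "l # ys \<in> walks_from n E m l"
    and xs: "xs = a # l # ys"
    by (auto simp: walks_from_def length_Suc_conv)
  have "E (xs ! i) (xs ! Suc i)" if "i < Suc m" for i
    using that \<open>E a l\<close> ys by (cases i) (auto simp: walks_from_def xs)
  then show "xs \<in> walks_from n E (Suc m) a"
    using ys \<open>a < n\<close> by (auto simp: walks_from_def xs)
qed

lemma card_walks_from_Suc: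
  assumes "a < n"
  shows "real (card (walks_from n E (Suc m) a)) = (\<Sum>l<n. adj E a l * real (card (walks_from n E m l)))"
proof -
  have "card (walks_from n E (Suc m) a) = (\<Sum>l\<in>{l. l < n \<and> E a l}. card (Cons a ` walks_from n E m l))"
    unfolding walks_from_Suc[OF assms]
    by (rule card_UN_disjoint) (auto simp: finite_walks_from, auto simp: walks_from_def)
  also have "\<dots> = (\<Sum>l\<in>{l\<in>{..<n}. E a l}. card (walks_from n E m l))"
    by (intro sum.cong) (auto simp: card_image)
  finally have "real (card (walks_from n E (Suc m) a))
      = (\<Sum>l\<in>{l\<in>{..<n}. E a l}. real (card (walks_from n E m l)))"
    by simp
  also have "\<dots> = (\<Sum>l<n. adj E a l * real (card (walks_from n E m l)))"
    unfolding sum.inter_filter[OF finite_lessThan] adj_def by (intro sum.cong) auto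
  finally show ?thesis .
qed

lemma card_walks_from_spectral:
  assumes eigen: "\<forall>j<n. \<forall>i<n. (\<Sum>m<n. adj E i m * v j m) = lam j * v j i"
    and coords: "\<forall>i<n. (\<Sum>j<n. \<mu> j * v j i) = 1"
    and "a < n"
  shows "real (card (walks_from n E m a)) = (\<Sum>j<n. \<mu> j * lam j ^ m * v j a)"
  using \<open>a < n\<close>
proof (induction m arbitrary: a)
  case 0
  then show ?case using coords by (simp add: walks_from_0)
next
  case (Suc m)
  have "real (card (walks_from n E (Suc m) a)) = (\<Sum>l<n. adj E a l * (\<Sum>j<n. \<mu> j * lam j ^ m * v j l))"
    using Suc by (simp add: card_walks_from_Suc)
  also have "\<dots> = (\<Sum>j<n. \<mu> j * lam j ^ m * (\<Sum>l<n. adj E a l * v j l))"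
    unfolding sum_distrib_left by (subst sum.swap) (simp add: mult_ac)
  also have "\<dots> = (\<Sum>j<n. \<mu> j * lam j ^ Suc m * v j a)"
    using eigen Suc.prems by (intro sum.cong) auto
  finally show ?case .
qed

lemma walks_eq_sum_card_walks_from: "walks n E m = (\<Sum>a<n. card (walks_from n E m a))"
proof -
  have "{xs. length xs = Suc m \<and> set xs \<subseteq> {..<n} \<and> (\<forall>i<m. E (xs ! i) (xs ! Suc i))}
     = (\<Union>a<n. walks_from n E m a)"
    by (auto simp: walks_from_def length_Suc_conv)
  then show ?thesis
    unfolding walks_def
    by (simp only:) (rule card_UN_disjoint, auto simp: finite_walks_from, auto simp: walks_from_def)
qed

lemma walks_spectral:
  assumes orthonormal: "\<forall>j<n. \<forall>l<n. (\<Sum>i<n. v j i * v l i) = (if j = l then 1 else 0)"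
    and eigen: "\<forall>j<n. \<forall>i<n. (\<Sum>m<n. adj E i m * v j m) = lam j * v j i"
    and coords: "\<forall>i<n. (\<Sum>j<n. \<mu> j * v j i) = 1"
  shows "real (walks n E m) = (\<Sum>j<n. (\<mu> j)\<^sup>2 * lam j ^ m)"
proof -
  have "real (walks n E m) = (\<Sum>a<n. (\<Sum>j'<n. \<mu> j' * v j' a) * (\<Sum>j<n. \<mu> j * lam j ^ m * v j a))"
    using card_walks_from_spectral[OF eigen coords] coords
    by (simp add: walks_eq_sum_card_walks_from)
  also have "\<dots> = (\<Sum>a<n. \<Sum>j'<n. \<Sum>j<n. \<mu> j' * \<mu> j * lam j ^ m * (v j' a * v j a))"
    by (simp add: sum_product mult_ac)
  also have "\<dots> = (\<Sum>j'<n. \<Sum>a<n. \<Sum>j<n. \<mu> j' * \<mu> j * lam j ^ m * (v j' a * v j a))"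
    by (rule sum.swap)
  also have "\<dots> = (\<Sum>j'<n. \<Sum>j<n. \<mu> j' * \<mu> j * lam j ^ m * (\<Sum>a<n. v j' a * v j a))"
    unfolding sum_distrib_left by (rule sum.cong[OF refl], rule sum.swap)
  also have "\<dots> = (\<Sum>j'<n. \<Sum>j<n. if j' = j then \<mu> j' * \<mu> j * lam j ^ m else 0)"
    using orthonormal by (intro sum.cong) auto
  also have "\<dots> = (\<Sum>j<n. (\<mu> j)\<^sup>2 * lam j ^ m)"
    by (simp add: power2_eq_square)
  finally show ?thesis .
qed

lemma prod_sum_eq_sum_tuples:
  fixes f :: "nat \<Rightarrow> 'a \<Rightarrow> 'b::comm_semiring_1"
  assumes "finite A"
  shows "(\<Prod>i<k. \<Sum>x\<in>A. f i x) = (\<Sum>xs\<in>tuples A k. \<Prod>i<k. f i (xs ! i))"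
proof (induction k arbitrary: f)
  case 0
  then show ?case by (simp cong: conj_cong)
next
  case (Suc k)
  have tuples_Suc: "tuples A (Suc k) = (\<lambda>(x, xs). x # xs) ` (A \<times> tuples A k)"
    by (auto simp: image_iff length_Suc_conv)
  have inj: "inj_on (\<lambda>(x, xs). x # xs) (A \<times> tuples A k)"
    by (auto simp: inj_on_def)
  have "(\<Prod>i<Suc k. \<Sum>x\<in>A. f i x) = (\<Sum>x\<in>A. f 0 x) * (\<Prod>i<k. \<Sum>x\<in>A. f (Suc i) x)"
    by (simp add: prod.lessThan_Suc_shift del: prod.lessThan_Suc)
  also have "\<dots> = (\<Sum>x\<in>A. f 0 x) * (\<Sum>xs\<in>tuples A k. \<Prod>i<k. f (Suc i) (xs ! i))"
    by (simp only: Suc.IH)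
  also have "\<dots> = (\<Sum>(x, xs)\<in>A \<times> tuples A k. \<Prod>i<Suc k. f i ((x # xs) ! i))"
    by (simp add: sum_product sum.cartesian_product prod.lessThan_Suc_shift del: prod.lessThan_Suc)
  also have "\<dots> = (\<Sum>xs\<in>tuples A (Suc k). \<Prod>i<Suc k. f i (xs ! i))"
    unfolding tuples_Suc sum.reindex[OF inj] by (simp add: case_prod_beta)
  finally show ?case .
qed

lemma permute_list_inv_cancel:
  assumes "p permutes {..<length xs}"
  shows "permute_list (inv p) (permute_list p xs) = xs"
    and "permute_list p (permute_list (inv p) xs) = xs"
  using assms
  by (simp_all add: permute_list_compose[symmetric] permutes_inv permutes_inv_o)

lemma sum_tuples_permute_list:
  assumes "p permutes {..<k}"
  shows "(\<Sum>t\<in>tuples A k. g (permute_list p t)) = (\<Sum>t\<in>tuples A k. g t)"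
  by (rule sum.reindex_bij_witness[where i = "permute_list (inv p)" and j = "permute_list p"])
     (use assms in \<open>auto simp: permute_list_inv_cancel permutes_inv\<close>)

lemma sum_permutations_permute_list_invariant:
  assumes "q permutes {..<length t}"
  shows "(\<Sum>\<sigma>\<in>{\<sigma>. \<sigma> permutes {..<length t}}. g (permute_list \<sigma> (permute_list q t)))
       = (\<Sum>\<sigma>\<in>{\<sigma>. \<sigma> permutes {..<length t}}. g (permute_list \<sigma> t))"
  using setum_permutations_compose_left[OF assms, of "\<lambda>\<sigma>. g (permute_list \<sigma> t)"]
  by (simp add: permute_list_compose)

lemma sum_permutations_permute_list_sort:
  "(\<Sum>\<sigma>\<in>{\<sigma>. \<sigma> permutes {..<length t}}. g (permute_list \<sigma> (sort t)))
     = (\<Sum>\<sigma>\<in>{\<sigma>. \<sigma> permutes {..<length t}}. g (permute_list \<sigma> t))"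
proof -
  obtain p where "p permutes {..<length t}" "permute_list p t = sort t"
    using mset_eq_permutation[of "sort t" t] by auto
  then show ?thesis using sum_permutations_permute_list_invariant by metis
qed

lemma sum_tuples_eq_sum_sorted_tuples:
  fixes A :: "'a::linorder set" and g :: "'a list \<Rightarrow> real"
  assumes "finite A"
  shows "(\<Sum>t\<in>tuples A k. g t) =
    (\<Sum>s\<in>sorted_tuples A k. real (card {t\<in>tuples A k. sort t = s}) / fact k *
       (\<Sum>\<sigma>\<in>{\<sigma>. \<sigma> permutes {..<k}}. g (permute_list \<sigma> s)))"
proof -
  let ?P = "{\<sigma>. \<sigma> permutes {..<k}}"
  define G where "G t = (\<Sum>\<sigma>\<in>?P. g (permute_list \<sigma> t))" for t
  have G_sort: "G (sort t) = G t" if "t \<in> tuples A k" for t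
    using that sum_permutations_permute_list_sort[of g t] by (simp add: G_def)
  have finite_tuples: "finite (tuples A k)"
    by (rule finite_subset[OF _ finite_lists_length_eq[OF assms, of k]]) auto
  have finite_sorted_tuples: "finite (sorted_tuples A k)"
    by (rule finite_subset[OF _ finite_tuples]) auto
  have "fact k * (\<Sum>t\<in>tuples A k. g t) = (\<Sum>\<sigma>\<in>?P. \<Sum>t\<in>tuples A k. g t)"
    by (simp add: card_permutations)
  also have "\<dots> = (\<Sum>\<sigma>\<in>?P. \<Sum>t\<in>tuples A k. g (permute_list \<sigma> t))"
    by (intro sum.cong refl sum_tuples_permute_list[symmetric]) simp
  also have "\<dots> = (\<Sum>t\<in>tuples A k. G t)"
    unfolding G_def by (rule sum.swap)
  also have "\<dots> = (\<Sum>s\<in>sorted_tuples A k. \<Sum>t\<in>{t\<in>tuples A k. sort t = s}. G t)"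
    by (rule sum.group[symmetric, OF finite_tuples finite_sorted_tuples]) auto
  also have "\<dots> = (\<Sum>s\<in>sorted_tuples A k. \<Sum>t\<in>{t\<in>tuples A k. sort t = s}. G s)"
    by (intro sum.cong refl) (auto simp: G_sort)
  also have "\<dots> = (\<Sum>s\<in>sorted_tuples A k. real (card {t\<in>tuples A k. sort t = s}) * G s)"
    by simp
  finally have "(\<Sum>t\<in>tuples A k. g t)
      = (\<Sum>s\<in>sorted_tuples A k. real (card {t\<in>tuples A k. sort t = s}) * G s) / fact k"
    by (simp add: eq_divide_eq mult.commute)
  then show ?thesis
    by (simp add: G_def sum_divide_distrib)
qed

lemma card_sort_fibre_pos:
  fixes A :: "'a::linorder set"
  assumes "finite A" and "s \<in> sorted_tuples A k"
  shows "0 < card {t\<in>tuples A k. sort t = s}"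
proof -
  have "s \<in> {t\<in>tuples A k. sort t = s}"
    using assms(2) by (simp add: sorted_sort_id)
  moreover have "finite {t\<in>tuples A k. sort t = s}"
    by (rule finite_subset[OF _ finite_lists_length_eq[OF assms(1), of k]]) auto
  ultimately show ?thesis by (auto simp: card_gt_0_iff)
qed

lemma poly_eval_cong: "(\<And>i. i < k \<Longrightarrow> x i = y i) \<Longrightarrow> poly_eval k c x = poly_eval k c y"
  unfolding poly_eval_def by (intro sum.cong refl arg_cong2[where f = "(*)"] prod.cong) auto

lemma prod_nth_permute_list:
  assumes "\<sigma> permutes {..<length t}"
  shows "(\<Prod>i<length t. h (permute_list \<sigma> t ! i)) = (\<Prod>i<length t. h (t ! i))"
  using prod.permute[OF assms, of "\<lambda>i. h (t ! i)"] assms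
  by (simp add: permute_list_nth)

lemma sum_permutations_weighted_poly_eval:
  assumes "length s = k"
  shows "(\<Sum>\<sigma>\<in>{\<sigma>. \<sigma> permutes {..<k}}.
            (\<Prod>i<k. \<omega> (permute_list \<sigma> s ! i)) * poly_eval k c (\<lambda>i. x (permute_list \<sigma> s ! i)))
       = poly_sym k c (\<lambda>i. x (s ! i)) * (\<Prod>i<k. \<omega> (s ! i))"
proof -
  have "(\<Prod>i<k. \<omega> (permute_list \<sigma> s ! i)) * poly_eval k c (\<lambda>i. x (permute_list \<sigma> s ! i))
      = poly_eval k c (\<lambda>i. x (s ! \<sigma> i)) * (\<Prod>i<k. \<omega> (s ! i))"
    if "\<sigma> permutes {..<k}" for \<sigma>
    using that assms prod_nth_permute_list[of \<sigma> s \<omega>]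
    by (auto simp: permute_list_nth intro!: poly_eval_cong)
  then show ?thesis
    by (simp add: poly_sym_def sum_distrib_right)
qed

lemma sum_coeffs_prod_power_sums:
  assumes "finite A"
  shows "(\<Sum>\<alpha>\<in>{\<alpha>. length \<alpha> = k \<and> c \<alpha> \<noteq> 0}. c \<alpha> * (\<Prod>i<k. \<Sum>j\<in>A. \<omega> j * x j ^ (\<alpha> ! i)))
       = (\<Sum>t\<in>tuples A k. (\<Prod>i<k. \<omega> (t ! i)) * poly_eval k c (\<lambda>i. x (t ! i)))"
proof -
  have "(\<Sum>\<alpha>\<in>{\<alpha>. length \<alpha> = k \<and> c \<alpha> \<noteq> 0}. c \<alpha> * (\<Prod>i<k. \<Sum>j\<in>A. \<omega> j * x j ^ (\<alpha> ! i)))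
      = (\<Sum>\<alpha>\<in>{\<alpha>. length \<alpha> = k \<and> c \<alpha> \<noteq> 0}. \<Sum>t\<in>tuples A k.
           (\<Prod>i<k. \<omega> (t ! i)) * (c \<alpha> * (\<Prod>i<k. x (t ! i) ^ (\<alpha> ! i))))"
    by (simp add: prod_sum_eq_sum_tuples[OF assms] sum_distrib_left prod.distrib mult_ac)
  also have "\<dots> = (\<Sum>t\<in>tuples A k. (\<Prod>i<k. \<omega> (t ! i)) * poly_eval k c (\<lambda>i. x (t ! i)))"
    by (subst sum.swap) (simp add: poly_eval_def sum_distrib_left)
  finally show ?thesis .
qed

theorem proposition1:
  fixes n k :: nat and E :: "nat \<Rightarrow> nat \<Rightarrow> bool"
    and lam \<mu> :: "nat \<Rightarrow> real" and v :: "nat \<Rightarrow> nat \<Rightarrow> real"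
    and c :: "nat list \<Rightarrow> real"
  assumes "n \<ge> 1" and "simple_graph n E"
    and lam_sorted: "\<forall>j l. j \<le> l \<longrightarrow> l < n \<longrightarrow> lam l \<le> lam j"
    and orthonormal: "\<forall>j<n. \<forall>l<n. (\<Sum>i<n. v j i * v l i) = (if j = l then 1 else 0)"
    and eigen: "\<forall>j<n. \<forall>i<n. (\<Sum>m<n. adj E i m * v j m) = lam j * v j i"
    and coords: "\<forall>i<n. (\<Sum>j<n. \<mu> j * v j i) = 1"
    and "k \<ge> 1"
    and "finite {\<alpha>. length \<alpha> = k \<and> c \<alpha> \<noteq> 0}"
  shows "\<exists>\<gamma> :: nat list \<Rightarrow> real.
     (\<forall>is. length is = k \<and> sorted is \<and> set is \<subseteq> {..<n} \<longrightarrow> \<gamma> is > 0) \<and>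
     (\<Sum>\<alpha>\<in>{\<alpha>. length \<alpha> = k \<and> c \<alpha> \<noteq> 0}. c \<alpha> * (\<Prod>i<k. real (walks n E (\<alpha> ! i)))) =
     (\<Sum>is\<in>{is. length is = k \<and> sorted is \<and> set is \<subseteq> {..<n}}.
        \<gamma> is * poly_sym k c (\<lambda>i. lam (is ! i)) * (\<Prod>i<k. (\<mu> (is ! i))\<^sup>2))"
proof -
  let ?M = "\<lambda>t. \<Prod>i<k. (\<mu> (t ! i))\<^sup>2"
  define \<gamma> where "\<gamma> s = real (card {t\<in>tuples {..<n} k. sort t = s}) / fact k" for s
  have "(\<Sum>\<alpha>\<in>{\<alpha>. length \<alpha> = k \<and> c \<alpha> \<noteq> 0}. c \<alpha> * (\<Prod>i<k. real (walks n E (\<alpha> ! i))))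
      = (\<Sum>\<alpha>\<in>{\<alpha>. length \<alpha> = k \<and> c \<alpha> \<noteq> 0}. c \<alpha> * (\<Prod>i<k. \<Sum>j<n. (\<mu> j)\<^sup>2 * lam j ^ (\<alpha> ! i)))"
    by (simp add: walks_spectral[OF orthonormal eigen coords])
  also have "\<dots> = (\<Sum>t\<in>tuples {..<n} k. ?M t * poly_eval k c (\<lambda>i. lam (t ! i)))"
    by (rule sum_coeffs_prod_power_sums) simp
  also have "\<dots> = (\<Sum>s\<in>sorted_tuples {..<n} k. \<gamma> s *
      (\<Sum>\<sigma>\<in>{\<sigma>. \<sigma> permutes {..<k}}. ?M (permute_list \<sigma> s) * poly_eval k c (\<lambda>i. lam (permute_list \<sigma> s ! i))))"
    unfolding \<gamma>_def by (rule sum_tuples_eq_sum_sorted_tuples) simp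
  also have "\<dots> = (\<Sum>s\<in>sorted_tuples {..<n} k. \<gamma> s * poly_sym k c (\<lambda>i. lam (s ! i)) * ?M s)"
    by (intro sum.cong refl)
       (simp add: sum_permutations_weighted_poly_eval[where \<omega> = "\<lambda>j. (\<mu> j)\<^sup>2"] mult.assoc)
  finally have "(\<Sum>\<alpha>\<in>{\<alpha>. length \<alpha> = k \<and> c \<alpha> \<noteq> 0}. c \<alpha> * (\<Prod>i<k. real (walks n E (\<alpha> ! i))))
      = (\<Sum>s\<in>sorted_tuples {..<n} k. \<gamma> s * poly_sym k c (\<lambda>i. lam (s ! i)) * ?M s)" .
  moreover have "\<gamma> s > 0" if "s \<in> sorted_tuples {..<n} k" for s
    using card_sort_fibre_pos[OF _ that] by (simp add: \<gamma>_def)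
  ultimately show ?thesis
    by (intro exI[of _ \<gamma>]) auto
qed

end
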